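(* Let $X$ be a locally compact Hausdorff totally disconnected space, $G$ a discrete group, $K$ a field, $\phi=(\phi_g,X_g,X)_{g\in G}$ a partial action of $G$ on $X$ (with $X_g$ open), and $I$ an ideal of $C_K(X)\rtimes_\phi G$. With $V_I=\bigcup\{\operatorname{supp}(f): f\delta_\varepsilon\in I\}$, one has $C_K(V_I)\rtimes_{\phi|_{V_I}}G\subseteq I$, and $C_K(V_I)\rtimes_{\phi|_{V_I}}G$ is the largest graded ideal of $C_K(X)\rtimes_\phi G$ contained in $I$.
   Context: A partial action of $G$ (identity $\varepsilon$) on a topological space $X$ is $(\phi_g,X_g,X)_{g\in G}$ with $X_g$ open, homeomorphisms $\phi_g:X_{g^{-1}}\to X_g$, and (i) $X_\varepsilon=X$, $\phi_\varepsilon=\operatorname{id}$; (ii) $\phi_g(X_{g^{-1}}\cap X_h)=X_g\cap X_{gh}$; (iii) $\phi_g\phi_h(x)=\phi_{gh}(x)$ for $x\in X_{h^{-1}}\cap X_{h^{-1}g^{-1}}$. $V\subseteq X$ is invariant if $\phi_{g^{-1}}(X_g\cap V)\subseteq X_{g^{-1}}\cap V$ for all $g$ (and $V_I$ is open invariant). $C_K(Y)$ is the algebra of compactly supported locally constant functions $Y\to K$; $C_K(W)$ for open $W$ is the ideal of functions vanishing off $W$; $\phi_g(f)=f\circ\phi_{g^{-1}}$. The partial skew group ring $C_K(X)\rtimes_\phi G$ consists of finite sums $\sum a_g\delta_g$, $a_g\in C_K(X_g)$, with product $(a_g\delta_g)(b_h\delta_h)=\phi_g(\phi_{g^{-1}}(a_g)b_h)\delta_{gh}$,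 graded by $\deg(a_g\delta_g)=g$; for open invariant $V$, $C_K(V)\rtimes_{\phi|_V}G=\{\sum a_g\delta_g: a_g\in C_K(V\cap X_g)\}$. An ideal is graded if it is the direct sum of its intersections with the homogeneous components. *)

theory Defs
  imports "HOL-Analysis.Analysis" "HOL-Algebra.Group"
begin

definition totally_disconnected_space :: "'a topology \<Rightarrow> bool" where
  "totally_disconnected_space T \<longleftrightarrow>
     (\<forall>S. S \<subseteq> topspace T \<and> connectedin T S \<longrightarrow> S = {} \<or> (\<exists>x. S = {x}))"

text \<open>Partial action of the group G on the whole space (the type 'x with its
  topology): Xg g is the open domain X_g, ph g is the map phi_g : X_(g^-1) -> X_g.\<close>
definition partial_action ::
  "('g, 'm) monoid_scheme \<Rightarrow> ('g \<Rightarrow> 'x::topological_space set) \<Rightarrow> ('g \<Rightarrow> 'x \<Rightarrow> 'x) \<Rightarrow> bool" where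
  "partial_action G Xg ph \<longleftrightarrow>
     (\<forall>g\<in>carrier G. open (Xg g)) \<and>
     (\<forall>g\<in>carrier G. \<exists>psi. homeomorphism (Xg (inv\<^bsub>G\<^esub> g)) (Xg g) (ph g) psi) \<and>
     Xg \<one>\<^bsub>G\<^esub> = UNIV \<and> (\<forall>x. ph \<one>\<^bsub>G\<^esub> x = x) \<and>
     (\<forall>g\<in>carrier G. \<forall>h\<in>carrier G.
        ph g ` (Xg (inv\<^bsub>G\<^esub> g) \<inter> Xg h) = Xg g \<inter> Xg (g \<otimes>\<^bsub>G\<^esub> h)) \<and>
     (\<forall>g\<in>carrier G. \<forall>h\<in>carrier G.
        \<forall>x \<in> Xg (inv\<^bsub>G\<^esub> h) \<inter> Xg (inv\<^bsub>G\<^esub> h \<otimes>\<^bsub>G\<^esub> inv\<^bsub>G\<^esub> g).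
          ph g (ph h x) = ph (g \<otimes>\<^bsub>G\<^esub> h) x)"

definition CK :: "('x::topological_space \<Rightarrow> 'k::field) set" where
  "CK = {f. (\<forall>x. \<exists>U. open U \<and> x \<in> U \<and> (\<forall>y\<in>U. f y = f x))
            \<and> compact (closure {x. f x \<noteq> 0})}"

definition CK_on :: "'x::topological_space set \<Rightarrow> ('x \<Rightarrow> 'k::field) set" where
  "CK_on W = {f \<in> CK. \<forall>x. x \<notin> W \<longrightarrow> f x = 0}"

definition supp :: "('x::topological_space \<Rightarrow> 'k::zero) \<Rightarrow> 'x set" where
  "supp f = closure {x. f x \<noteq> 0}"

definition act_fun ::
  "('g, 'm) monoid_scheme \<Rightarrow> ('g \<Rightarrow> 'x set) \<Rightarrow> ('g \<Rightarrow> 'x \<Rightarrow> 'x) \<Rightarrow> 'g \<Rightarrow> ('x \<Rightarrow> 'k::zero) \<Rightarrow> 'x \<Rightarrow> 'k" where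
  "act_fun G Xg ph g f = (\<lambda>x. if x \<in> Xg g then f (ph (inv\<^bsub>G\<^esub> g) x) else 0)"

text \<open>Elements of the partial skew group ring are represented as finitely supported
  families a : G -> C_K(X), with a g \<in> C_K(X_g) (a g is the coefficient of delta_g).\<close>
definition skew_ring ::
  "('g, 'm) monoid_scheme \<Rightarrow> ('g \<Rightarrow> 'x::topological_space set) \<Rightarrow> ('g \<Rightarrow> 'x \<Rightarrow> 'k::field) set" where
  "skew_ring G Xg = {a. (\<forall>g. g \<notin> carrier G \<longrightarrow> a g = (\<lambda>_. 0)) \<and>
                        finite {g. a g \<noteq> (\<lambda>_. 0)} \<and>
                        (\<forall>g\<in>carrier G. a g \<in> CK_on (Xg g))}"

definition skew_zero :: "'g \<Rightarrow> 'x \<Rightarrow> 'k::field" where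
  "skew_zero = (\<lambda>_ _. 0)"

definition skew_add :: "('g \<Rightarrow> 'x \<Rightarrow> 'k::field) \<Rightarrow> ('g \<Rightarrow> 'x \<Rightarrow> 'k) \<Rightarrow> 'g \<Rightarrow> 'x \<Rightarrow> 'k" where
  "skew_add a b = (\<lambda>g x. a g x + b g x)"

definition skew_neg :: "('g \<Rightarrow> 'x \<Rightarrow> 'k::field) \<Rightarrow> 'g \<Rightarrow> 'x \<Rightarrow> 'k" where
  "skew_neg a = (\<lambda>g x. - a g x)"

text \<open>(a_g delta_g)(b_h delta_h) = phi_g(phi_(g^-1)(a_g) b_h) delta_(gh), extended bilinearly.\<close>
definition skew_mult ::
  "('g, 'm) monoid_scheme \<Rightarrow> ('g \<Rightarrow> 'x set) \<Rightarrow> ('g \<Rightarrow> 'x \<Rightarrow> 'x) \<Rightarrow>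
   ('g \<Rightarrow> 'x \<Rightarrow> 'k::field) \<Rightarrow> ('g \<Rightarrow> 'x \<Rightarrow> 'k) \<Rightarrow> 'g \<Rightarrow> 'x \<Rightarrow> 'k" where
  "skew_mult G Xg ph a b = (\<lambda>k.
     if k \<in> carrier G then
       (\<lambda>x. \<Sum>g\<in>{g\<in>carrier G. a g \<noteq> (\<lambda>_. 0)}.
              act_fun G Xg ph g
                (\<lambda>y. act_fun G Xg ph (inv\<^bsub>G\<^esub> g) (a g) y * b (inv\<^bsub>G\<^esub> g \<otimes>\<^bsub>G\<^esub> k) y) x)
     else (\<lambda>_. 0))"

definition skew_ideal ::
  "('g, 'm) monoid_scheme \<Rightarrow> ('g \<Rightarrow> 'x::topological_space set) \<Rightarrow> ('g \<Rightarrow> 'x \<Rightarrow> 'x) \<Rightarrow>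
   ('g \<Rightarrow> 'x \<Rightarrow> 'k::field) set \<Rightarrow> bool" where
  "skew_ideal G Xg ph I \<longleftrightarrow>
     I \<subseteq> skew_ring G Xg \<and> skew_zero \<in> I \<and>
     (\<forall>a\<in>I. \<forall>b\<in>I. skew_add a b \<in> I) \<and> (\<forall>a\<in>I. skew_neg a \<in> I) \<and>
     (\<forall>a\<in>I. \<forall>r\<in>skew_ring G Xg. skew_mult G Xg ph r a \<in> I \<and> skew_mult G Xg ph a r \<in> I)"

definition homog :: "('g \<Rightarrow> 'x \<Rightarrow> 'k::zero) \<Rightarrow> 'g \<Rightarrow> 'g \<Rightarrow> 'x \<Rightarrow> 'k" where
  "homog a g = (\<lambda>h. if h = g then a g else (\<lambda>_. 0))"

text \<open>Graded: I is the direct sum of its intersections with the homogeneous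
  components, i.e. every homogeneous component of an element of I lies in I.\<close>
definition graded :: "('g, 'm) monoid_scheme \<Rightarrow> ('g \<Rightarrow> 'x \<Rightarrow> 'k::zero) set \<Rightarrow> bool" where
  "graded G I \<longleftrightarrow> (\<forall>a\<in>I. \<forall>g\<in>carrier G. homog a g \<in> I)"

definition skew_restr ::
  "('g, 'm) monoid_scheme \<Rightarrow> ('g \<Rightarrow> 'x::topological_space set) \<Rightarrow> 'x set \<Rightarrow> ('g \<Rightarrow> 'x \<Rightarrow> 'k::field) set" where
  "skew_restr G Xg V = {a \<in> skew_ring G Xg. \<forall>g\<in>carrier G. a g \<in> CK_on (V \<inter> Xg g)}"

definition V_of :: "('g, 'm) monoid_scheme \<Rightarrow> ('g \<Rightarrow> 'x::topological_space \<Rightarrow> 'k::field) set \<Rightarrow> 'x set" where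
  "V_of G I = \<Union>{supp f | f. (\<lambda>h. if h = \<one>\<^bsub>G\<^esub> then f else (\<lambda>_. 0)) \<in> I}"

end

theory Submission
  imports Defs
begin

(* The functions f with f delta_e in I form an ideal of C_K(X) whose nonzero sets cover V_I.
   By compactness every f in C_K(V_I) has a local unit u in this ideal, so that
   f delta_g = (u delta_e)(f delta_g) lies in I, and hence so does every element of
   C_K(V_I) x G.  Conversely, if f delta_g lies in I and c is the indicator of a compact open
   neighbourhood of phi_g^-1(x) inside X_g^-1, then (f delta_g)(c delta_g^-1) = c' delta_e
   with c'(x) = f(x).  This shows both that V_I is invariant, which makes C_K(V_I) x G an
   ideal, and that the coefficients of every graded ideal inside I are supported in V_I. *)

lemma compact_open_base_if_totally_disconnected:
  fixes W :: "'x::t2_space set"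
  assumes lc: "locally_compact_space (euclidean :: 'x topology)"
    and td: "totally_disconnected_space (euclidean :: 'x topology)"
    and W: "open W" "x \<in> W"
  shows "\<exists>U. open U \<and> compact U \<and> x \<in> U \<and> U \<subseteq> W"
proof -
  have hd: "Hausdorff_space (euclidean :: 'x topology)"
    unfolding Hausdorff_space_def using hausdorff by (simp add: disjnt_def) blast
  obtain N K where NK: "open N" "compact K" "x \<in> N" "N \<subseteq> K"
    using lc unfolding locally_compact_space_def
    by (metis UNIV_I compactin_euclidean_iff open_openin topspace_euclidean)
  define C where "C = connected_component_of_set (euclidean :: 'x topology) x"
  have "connectedin euclidean C" "x \<in> C"
    unfolding C_def by (simp_all add: connectedin_connected_component_of connected_component_of_refl)
  then have C: "C = {x}" using td unfolding totally_disconnected_space_def by auto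
  have "C \<in> connected_components_of euclidean" unfolding C_def
    by (simp only: connected_component_in_connected_components_of topspace_euclidean UNIV_I)
  then obtain U V where UV: "open U" "open V" "disjnt U V" "U \<union> V = UNIV" "x \<in> U" "U \<subseteq> W \<inter> N"
    using wilder_locally_compact_component_thm[OF lc hd, of C "W \<inter> N"] C W NK by auto
  then have "U = - V" by (auto simp: disjnt_def)
  then have "closed U" using UV by auto
  then have "compact (K \<inter> U)" using NK by blast
  moreover have "K \<inter> U = U" using UV NK by auto
  ultimately show ?thesis using UV by auto
qed

section \<open>Compactly supported locally constant functions\<close>

lemma CK_locally_constant: "f \<in> CK \<Longrightarrow> \<exists>U. open U \<and> x \<in> U \<and> (\<forall>y\<in>U. f y = f x)"
  by (simp add: CK_def)

lemma open_nonzero_CK: "f \<in> CK \<Longrightarrow> open {x. f x \<noteq> 0}"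
  by (subst open_subopen) (metis (mono_tags, lifting) CK_locally_constant mem_Collect_eq subsetI)

lemma closed_nonzero_CK: "f \<in> CK \<Longrightarrow> closed {x. f x \<noteq> 0}"
  unfolding closed_def Compl_eq mem_Collect_eq not_not
  by (subst open_subopen) (metis (mono_tags, lifting) CK_locally_constant mem_Collect_eq subsetI)

lemma compact_nonzero_CK: "f \<in> CK \<Longrightarrow> compact {x. f x \<noteq> 0}"
  using closed_nonzero_CK[of f] by (simp add: CK_def)

lemma compact_closure_subset_compact:
  fixes S :: "'x::t2_space set"
  assumes "compact T" "S \<subseteq> T"
  shows "compact (closure S)"
proof -
  have "closure S \<subseteq> T" using assms by (simp add: closure_minimal compact_imp_closed)
  then show ?thesis using compact_Int_closed[OF assms(1), of "closure S"] by (simp add: Int_absorb1)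
qed

lemma CK_combine:
  fixes f g :: "'x::t2_space \<Rightarrow> 'k::field"
  assumes f: "f \<in> CK" and g: "g \<in> CK" and F: "F 0 0 = (0::'k)"
  shows "(\<lambda>x. F (f x) (g x)) \<in> CK"
proof -
  have "\<exists>U. open U \<and> x \<in> U \<and> (\<forall>y\<in>U. F (f y) (g y) = F (f x) (g x))" for x
  proof -
    obtain U where U: "open U" "x \<in> U" "\<forall>y\<in>U. f y = f x"
      using CK_locally_constant[OF f] by blast
    obtain V where V: "open V" "x \<in> V" "\<forall>y\<in>V. g y = g x"
      using CK_locally_constant[OF g] by blast
    have "F (f y) (g y) = F (f x) (g x)" if "y \<in> U \<inter> V" for y
      using that U(3) V(3) by (metis IntD1 IntD2)
    then show ?thesis using U V by (intro exI[of _ "U \<inter> V"]) blast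
  qed
  moreover have "compact (closure {x. F (f x) (g x) \<noteq> 0})"
  proof (rule compact_closure_subset_compact)
    show "compact ({x. f x \<noteq> 0} \<union> {x. g x \<noteq> 0})"
      using compact_nonzero_CK[OF f] compact_nonzero_CK[OF g] by blast
    show "{x. F (f x) (g x) \<noteq> 0} \<subseteq> {x. f x \<noteq> 0} \<union> {x. g x \<noteq> 0}"
      using F by auto
  qed
  ultimately show ?thesis by (simp add: CK_def)
qed

lemma CK_on_CK: "f \<in> CK_on W \<Longrightarrow> f \<in> CK"
  by (simp add: CK_on_def)

lemma CK_on_mono: "f \<in> CK_on A \<Longrightarrow> A \<subseteq> B \<Longrightarrow> f \<in> CK_on B"
  by (auto simp: CK_on_def)

lemma CK_on_UNIV: "CK_on UNIV = CK"
  by (simp add: CK_on_def)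

lemma CK_on_zero: "(\<lambda>_. 0) \<in> CK_on W"
  by (auto simp: CK_on_def CK_def intro: exI[of _ UNIV])

lemma CK_on_add:
  fixes f g :: "'x::t2_space \<Rightarrow> 'k::field"
  shows "f \<in> CK_on W \<Longrightarrow> g \<in> CK_on W \<Longrightarrow> (\<lambda>x. f x + g x) \<in> CK_on W"
  using CK_combine[of f g "(+)"] by (simp add: CK_on_def)

lemma CK_on_uminus:
  fixes f :: "'x::t2_space \<Rightarrow> 'k::field"
  shows "f \<in> CK_on W \<Longrightarrow> (\<lambda>x. - f x) \<in> CK_on W"
  using CK_combine[of f f "\<lambda>a _. - a"] by (simp add: CK_on_def)

lemma CK_on_mult:
  fixes f g :: "'x::t2_space \<Rightarrow> 'k::field"
  shows "f \<in> CK_on A \<Longrightarrow> g \<in> CK_on B \<Longrightarrow> (\<lambda>x. f x * g x) \<in> CK_on (A \<inter> B)"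
  using CK_combine[of f g "(*)"] by (auto simp: CK_on_def)

lemma CK_on_sum:
  fixes F :: "'i \<Rightarrow> 'x::t2_space \<Rightarrow> 'k::field"
  assumes "\<And>i. i \<in> S \<Longrightarrow> F i \<in> CK_on W"
  shows "(\<lambda>x. \<Sum>i\<in>S. F i x) \<in> CK_on W"
  using assms
proof (induction S rule: infinite_finite_induct)
  case (insert i S)
  then show ?case using CK_on_add[of "F i" W "\<lambda>x. \<Sum>i\<in>S. F i x"] by simp
qed (simp_all add: CK_on_zero)

lemma CK_on_indicator:
  fixes U :: "'x::t2_space set"
  assumes U: "open U" "compact U" and "U \<subseteq> W"
  shows "(indicator U :: 'x \<Rightarrow> 'k::field) \<in> CK_on W"
proof -
  have "\<exists>V. open V \<and> x \<in> V \<and> (\<forall>y\<in>V. (indicator U y :: 'k) = indicator U x)" for x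
  proof (cases "x \<in> U")
    case True
    then show ?thesis using U by (intro exI[of _ U]) simp
  next
    case False
    then show ?thesis using compact_imp_closed[OF U(2)] by (intro exI[of _ "- U"]) auto
  qed
  moreover have "{x. (indicator U x :: 'k) \<noteq> 0} = U" by (auto simp: indicator_def)
  moreover have "\<forall>x. x \<notin> W \<longrightarrow> (indicator U x :: 'k) = 0"
    using \<open>U \<subseteq> W\<close> by (auto simp: indicator_def)
  ultimately show ?thesis
    using U compact_imp_closed[OF U(2)] by (simp add: CK_on_def CK_def)
qed

lemma CK_on_pullback_homeomorphism:
  fixes f :: "'x::topological_space \<Rightarrow> 'k::field" and h :: "'y::t2_space \<Rightarrow> 'x"
  assumes hom: "homeomorphism B A h k" and B: "open B" and f: "f \<in> CK_on A"
  shows "(\<lambda>y. if y \<in> B then f (h y) else 0) \<in> CK_on B"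
proof -
  define F where "F = (\<lambda>y. if y \<in> B then f (h y) else 0)"
  define S where "S = {x. f x \<noteq> 0}"
  have SA: "S \<subseteq> A" using f by (auto simp: S_def CK_on_def)
  have "compact (k ` S)"
    using hom SA compact_nonzero_CK[OF CK_on_CK[OF f]]
    by (metis S_def compact_continuous_image continuous_on_subset homeomorphism_def)
  note kS = this compact_imp_closed[OF this]
  have supp: "{y. F y \<noteq> 0} = k ` S"
    using hom SA unfolding homeomorphism_def S_def F_def by force
  have loc: "\<exists>U. open U \<and> y \<in> U \<and> (\<forall>z\<in>U. F z = F y)" for y
  proof (cases "y \<in> B")
    case True
    obtain U where U: "open U" "h y \<in> U" "\<forall>z\<in>U. f z = f (h y)"
      using CK_locally_constant[OF CK_on_CK[OF f]] by blast
    have "open (h -` U \<inter> B)"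
      using hom B U(1) by (simp add: continuous_on_open_vimage homeomorphism_def)
    moreover have "F z = F y" if "z \<in> h -` U \<inter> B" for z
      using that True U(3) unfolding F_def by (metis IntD1 IntD2 vimageE)
    ultimately show ?thesis using True U(2) by (intro exI[of _ "h -` U \<inter> B"]) blast
  next
    case False
    then have "y \<in> - k ` S" using SA homeomorphism_image2[OF hom] by blast
    moreover have "F z = 0" if "z \<in> - k ` S" for z
      using that by (simp add: supp[symmetric])
    ultimately show ?thesis using kS(2) by (intro exI[of _ "- k ` S"]) (simp add: open_Compl)
  qed
  have "compact (closure {y. F y \<noteq> 0})" unfolding supp using kS by (simp add: closure_closed)
  then have "F \<in> CK" unfolding CK_def mem_Collect_eq by (intro conjI allI loc)
  then show ?thesis unfolding F_def[symmetric] by (simp add: CK_on_def F_def)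
qed

(* Closure under negation follows from closure under multiplication by CK. *)
definition CK_ideal :: "('x::topological_space \<Rightarrow> 'k::field) set \<Rightarrow> bool" where
  "CK_ideal D \<longleftrightarrow> D \<subseteq> CK \<and> (\<lambda>_. 0) \<in> D \<and> (\<forall>f\<in>D. \<forall>g\<in>D. (\<lambda>x. f x + g x) \<in> D) \<and>
     (\<forall>f\<in>D. \<forall>q\<in>CK. (\<lambda>x. q x * f x) \<in> D)"

lemma CK_idealD:
  assumes "CK_ideal D"
  shows "D \<subseteq> CK" "(\<lambda>_. 0) \<in> D"
    and "f \<in> D \<Longrightarrow> g \<in> D \<Longrightarrow> (\<lambda>x. f x + g x) \<in> D"
    and "f \<in> D \<Longrightarrow> q \<in> CK \<Longrightarrow> (\<lambda>x. q x * f x) \<in> D"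
  using assms unfolding CK_ideal_def by blast+

lemma CK_ideal_indicator_nonzero:
  fixes D :: "('x::t2_space \<Rightarrow> 'k::field) set"
  assumes D: "CK_ideal D" and f: "f \<in> D"
  shows "indicator {x. f x \<noteq> 0} \<in> D"
proof -
  have "f \<in> CK" using CK_idealD(1)[OF D] f by blast
  \<comment> \<open>inverse 0 = 0, so inverse f * f is the indicator of the support of f\<close>
  then have "(\<lambda>x. inverse (f x)) \<in> CK" using CK_combine[of f f "\<lambda>a _. inverse a"] by simp
  then have "(\<lambda>x. inverse (f x) * f x) \<in> D" using CK_idealD(4)[OF D f] by blast
  moreover have "(\<lambda>x. inverse (f x) * f x) = indicator {x. f x \<noteq> 0}"
    by (simp add: fun_eq_iff indicator_def)
  ultimately show ?thesis by simp
qed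

lemma CK_ideal_unit_on_finite:
  fixes D :: "('x::t2_space \<Rightarrow> 'k::field) set"
  assumes D: "CK_ideal D" and "finite F" "F \<subseteq> D"
  shows "\<exists>u\<in>D. \<forall>f\<in>F. \<forall>x. f x \<noteq> 0 \<longrightarrow> u x = 1"
  using assms(2,3)
proof (induction F rule: finite_induct)
  case empty
  show ?case using CK_idealD(2)[OF D] by (intro bexI[of _ "\<lambda>_. 0"]) simp_all
next
  case (insert f F)
  have "f \<in> D" "F \<subseteq> D" using insert.prems by simp_all
  then obtain u where u: "u \<in> D" "\<forall>f\<in>F. \<forall>x. f x \<noteq> 0 \<longrightarrow> u x = 1"
    using insert.IH by blast
  define e :: "'x \<Rightarrow> 'k" where "e = indicator {x. f x \<noteq> 0}"
  have e: "e \<in> D" unfolding e_def using CK_ideal_indicator_nonzero[OF D \<open>f \<in> D\<close>] .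
  have "(\<lambda>x. - e x) \<in> CK"
    using e CK_idealD(1)[OF D] CK_combine[of e e "\<lambda>a _. - a"] by auto
  \<comment> \<open>the join u + e - e u of the idempotents u and e\<close>
  from CK_idealD(3)[OF D CK_idealD(3)[OF D u(1) e] CK_idealD(4)[OF D u(1) this]]
  have "(\<lambda>x. (u x + e x) + (- e x) * u x) \<in> D" .
  moreover have "(u x + e x) + (- e x) * u x = 1" if "g \<in> insert f F" "g x \<noteq> 0" for g x
  proof (cases "g = f")
    case True
    then have "e x = 1" using that by (simp add: e_def)
    then show ?thesis by simp
  next
    case False
    then have "u x = 1" using that u(2) by blast
    then show ?thesis by simp
  qed
  ultimately show ?case by (intro bexI[of _ "\<lambda>x. (u x + e x) + (- e x) * u x"]) blast+
qed

lemma CK_ideal_unit_on_compact: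
  fixes D :: "('x::t2_space \<Rightarrow> 'k::field) set"
  assumes D: "CK_ideal D" and K: "compact K" "K \<subseteq> (\<Union>f\<in>D. {x. f x \<noteq> 0})"
  obtains u where "u \<in> D" "\<forall>x\<in>K. u x = 1"
proof -
  have "open {x. f x \<noteq> 0}" if "f \<in> D" for f
    using CK_idealD(1)[OF D] that open_nonzero_CK by blast
  then obtain F where F: "F \<subseteq> D" "finite F" "K \<subseteq> (\<Union>f\<in>F. {x. f x \<noteq> 0})"
    using compactE_image[OF K(1) _ K(2)] by blast
  obtain u where u: "u \<in> D" "\<forall>f\<in>F. \<forall>x. f x \<noteq> 0 \<longrightarrow> u x = 1"
    using CK_ideal_unit_on_finite[OF D F(2,1)] by blast
  have "u x = 1" if "x \<in> K" for x
  proof -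
    obtain f where "f \<in> F" "f x \<noteq> 0" using F(3) \<open>x \<in> K\<close> by blast
    then show "u x = 1" using u(2) by blast
  qed
  then show ?thesis using that u(1) by blast
qed

section \<open>The partial skew group ring\<close>

definition skew_monom :: "'g \<Rightarrow> ('x \<Rightarrow> 'k::zero) \<Rightarrow> 'g \<Rightarrow> 'x \<Rightarrow> 'k" where
  "skew_monom g f = (\<lambda>h. if h = g then f else (\<lambda>_. 0))"

lemma homog_eq_skew_monom: "homog a g = skew_monom g (a g)"
  by (simp add: homog_def skew_monom_def)

lemma skew_monom_zero: "skew_monom g (\<lambda>_. 0) = skew_zero"
  by (auto simp: skew_monom_def skew_zero_def)

lemma skew_add_skew_monom:
  "skew_add (skew_monom g f) (skew_monom g f') = skew_monom g (\<lambda>x. f x + f' x)"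
  by (auto simp: skew_add_def skew_monom_def)

lemma skew_monom_in_skew_ring:
  "g \<in> carrier G \<Longrightarrow> f \<in> CK_on (Xg g) \<Longrightarrow> skew_monom g f \<in> skew_ring G Xg"
  unfolding skew_ring_def skew_monom_def
  by (auto simp: CK_on_zero intro: finite_subset[of _ "{g}"])

lemma skew_ring_outside_carrier: "a \<in> skew_ring G Xg \<Longrightarrow> g \<notin> carrier G \<Longrightarrow> a g = (\<lambda>_. 0)"
  by (simp add: skew_ring_def)

lemma skew_ring_coeff: "a \<in> skew_ring G Xg \<Longrightarrow> g \<in> carrier G \<Longrightarrow> a g \<in> CK_on (Xg g)"
  by (simp add: skew_ring_def)

lemma skew_restr_iff:
  "a \<in> skew_restr G Xg V \<longleftrightarrow> a \<in> skew_ring G Xg \<and> (\<forall>g\<in>carrier G. \<forall>x. a g x \<noteq> 0 \<longrightarrow> x \<in> V)"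
  by (auto simp: skew_restr_def skew_ring_def CK_on_def)

lemma skew_restr_ring: "a \<in> skew_restr G Xg V \<Longrightarrow> a \<in> skew_ring G Xg"
  by (simp add: skew_restr_iff)

lemma skew_restr_nonzero_mem:
  "a \<in> skew_restr G Xg V \<Longrightarrow> g \<in> carrier G \<Longrightarrow> a g x \<noteq> 0 \<Longrightarrow> x \<in> V"
  by (simp add: skew_restr_iff)

lemma graded_skew_restr: "graded G (skew_restr G Xg V)"
  unfolding graded_def
proof (intro ballI)
  fix a g assume a: "a \<in> skew_restr G Xg V" and g: "g \<in> carrier G"
  then have ar: "a \<in> skew_ring G Xg" and V: "\<forall>x. a g x \<noteq> 0 \<longrightarrow> x \<in> V"
    by (auto simp: skew_restr_iff)
  have "skew_monom g (a g) \<in> skew_ring G Xg"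
    using g skew_ring_coeff[OF ar g] by (rule skew_monom_in_skew_ring)
  then show "homog a g \<in> skew_restr G Xg V"
    using V by (auto simp: skew_restr_iff homog_eq_skew_monom skew_monom_def)
qed

lemma V_of_eq_skew_monom: "V_of G I = \<Union>{supp f | f. skew_monom \<one>\<^bsub>G\<^esub> f \<in> I}"
  by (simp add: V_of_def skew_monom_def)

lemma skew_idealD:
  assumes "skew_ideal G Xg ph I"
  shows "I \<subseteq> skew_ring G Xg" "skew_zero \<in> I"
    and "a \<in> I \<Longrightarrow> b \<in> I \<Longrightarrow> skew_add a b \<in> I"
    and "a \<in> I \<Longrightarrow> r \<in> skew_ring G Xg \<Longrightarrow> skew_mult G Xg ph r a \<in> I"
    and "a \<in> I \<Longrightarrow> r \<in> skew_ring G Xg \<Longrightarrow> skew_mult G Xg ph a r \<in> I"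
  using assms by (auto simp: skew_ideal_def)

lemma mem_if_homog_mem:
  fixes I :: "('g \<Rightarrow> 'x \<Rightarrow> 'k::field) set"
  assumes zero: "skew_zero \<in> I" and add: "\<And>a b. a \<in> I \<Longrightarrow> b \<in> I \<Longrightarrow> skew_add a b \<in> I"
    and fin: "finite {g. a g \<noteq> (\<lambda>_. 0)}" and homog: "\<And>g. a g \<noteq> (\<lambda>_. 0) \<Longrightarrow> homog a g \<in> I"
  shows "a \<in> I"
proof -
  have "a \<in> I" if "finite F" "{g. a g \<noteq> (\<lambda>_. 0)} \<subseteq> F" "\<And>g. a g \<noteq> (\<lambda>_. 0) \<Longrightarrow> homog a g \<in> I"
    for F a
    using that
  proof (induction F arbitrary: a rule: finite_induct)
    case empty
    then have "a = skew_zero" by (auto simp: skew_zero_def)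
    then show ?case using zero by simp
  next
    case (insert g F)
    define a' where "a' = a(g := (\<lambda>_. 0))"
    have "a' \<in> I"
    proof (rule insert.IH)
      show "{h. a' h \<noteq> (\<lambda>_. 0)} \<subseteq> F" using insert.prems(1) by (auto simp: a'_def)
      show "homog a' h \<in> I" if "a' h \<noteq> (\<lambda>_. 0)" for h
      proof -
        from that have "h \<noteq> g" "a h \<noteq> (\<lambda>_. 0)" by (auto simp: a'_def split: if_splits)
        then have "homog a' h = homog a h" by (auto simp: a'_def homog_def fun_eq_iff)
        then show ?thesis using insert.prems(2)[OF \<open>a h \<noteq> (\<lambda>_. 0)\<close>] by simp
      qed
    qed
    show ?case
    proof (cases "a g = (\<lambda>_. 0)")
      case True
      then have "a' = a" unfolding a'_def by (rule fun_upd_idem)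
      then show ?thesis using \<open>a' \<in> I\<close> by simp
    next
      case False
      have "a = skew_add (homog a g) a'"
        by (auto simp: skew_add_def homog_def a'_def)
      then show ?thesis using add insert.prems(2) False \<open>a' \<in> I\<close> by metis
    qed
  qed
  then show ?thesis using fin homog by blast
qed

locale group_partial_action = group G for G :: "('g, 'm) monoid_scheme" (structure) +
  fixes Xg :: "'g \<Rightarrow> 'x::t2_space set" and ph :: "'g \<Rightarrow> 'x \<Rightarrow> 'x"
  assumes partial_action: "partial_action G Xg ph"
begin

lemma open_Xg: "g \<in> carrier G \<Longrightarrow> open (Xg g)"
  using partial_action by (simp add: partial_action_def)

lemma Xg_one: "Xg \<one> = UNIV"
  using partial_action by (simp add: partial_action_def)

lemma ph_one: "ph \<one> x = x"
  using partial_action by (simp add: partial_action_def)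

lemma act_fun_one: "act_fun G Xg ph \<one> f = f"
  by (simp add: act_fun_def Xg_one ph_one)

lemma ph_image_Int:
  "g \<in> carrier G \<Longrightarrow> h \<in> carrier G \<Longrightarrow> ph g ` (Xg (inv g) \<inter> Xg h) = Xg g \<inter> Xg (g \<otimes> h)"
  using partial_action by (simp add: partial_action_def)

lemma ph_inv_mem: "g \<in> carrier G \<Longrightarrow> x \<in> Xg g \<Longrightarrow> ph (inv g) x \<in> Xg (inv g)"
  using ph_image_Int[of "inv g" \<one>] by (auto simp: Xg_one)

lemma ph_ph_inv: "g \<in> carrier G \<Longrightarrow> x \<in> Xg g \<Longrightarrow> ph g (ph (inv g) x) = x"
  using partial_action unfolding partial_action_def
  by (metis IntI Xg_one UNIV_I inv_closed inv_inv l_inv ph_one)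

lemma homeomorphism_ph_inv:
  "g \<in> carrier G \<Longrightarrow> \<exists>psi. homeomorphism (Xg g) (Xg (inv g)) (ph (inv g)) psi"
  using partial_action unfolding partial_action_def by (metis inv_closed inv_inv)

lemma act_fun_CK_on:
  assumes "g \<in> carrier G" "f \<in> CK_on (Xg (inv g))"
  shows "act_fun G Xg ph g f \<in> CK_on (Xg g)"
proof -
  obtain psi where "homeomorphism (Xg g) (Xg (inv g)) (ph (inv g)) psi"
    using homeomorphism_ph_inv[OF assms(1)] by blast
  from CK_on_pullback_homeomorphism[OF this open_Xg[OF assms(1)] assms(2)]
  show ?thesis unfolding act_fun_def .
qed

lemma act_fun_CK_on_Int:
  assumes g: "g \<in> carrier G" and h: "h \<in> carrier G" and f: "f \<in> CK_on (Xg (inv g) \<inter> Xg h)"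
  shows "act_fun G Xg ph g f \<in> CK_on (Xg g \<inter> Xg (g \<otimes> h))"
proof -
  have "x \<in> Xg (g \<otimes> h)" if "act_fun G Xg ph g f x \<noteq> 0" for x
  proof -
    have x: "x \<in> Xg g" and "f (ph (inv g) x) \<noteq> 0"
      using that by (simp_all add: act_fun_def split: if_splits)
    then have "ph (inv g) x \<in> Xg (inv g) \<inter> Xg h" using f by (auto simp: CK_on_def)
    then have "ph g (ph (inv g) x) \<in> Xg (g \<otimes> h)" using ph_image_Int[OF g h] by blast
    then show ?thesis using ph_ph_inv[OF g x] by simp
  qed
  moreover have "act_fun G Xg ph g f \<in> CK_on (Xg g)"
    using act_fun_CK_on[OF g CK_on_mono[OF f]] by simp
  ultimately show ?thesis unfolding CK_on_def by blast
qed

(* (a delta_g)(b delta_h) = phi_g(phi_g^-1(a) b) delta_gh *)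
abbreviation coeff_prod :: "'g \<Rightarrow> ('x \<Rightarrow> 'k::field) \<Rightarrow> ('x \<Rightarrow> 'k) \<Rightarrow> 'x \<Rightarrow> 'k" where
  "coeff_prod g a b \<equiv> act_fun G Xg ph g (\<lambda>y. act_fun G Xg ph (inv g) a y * b y)"

lemma coeff_prod_apply:
  "g \<in> carrier G \<Longrightarrow> coeff_prod g a b x = (if x \<in> Xg g then a x * b (ph (inv g) x) else 0)"
  using ph_inv_mem ph_ph_inv by (simp add: act_fun_def)

lemma coeff_prod_CK_on:
  assumes g: "g \<in> carrier G" and k: "k \<in> carrier G"
    and a: "a \<in> CK_on (Xg g)" and b: "b \<in> CK_on (Xg (inv g \<otimes> k))"
  shows "coeff_prod g a b \<in> CK_on (Xg k)"
proof -
  have "act_fun G Xg ph (inv g) a \<in> CK_on (Xg (inv g))"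
    using act_fun_CK_on[of "inv g"] a g by simp
  from CK_on_mult[OF this b] g k
  have "coeff_prod g a b \<in> CK_on (Xg g \<inter> Xg (g \<otimes> (inv g \<otimes> k)))"
    by (intro act_fun_CK_on_Int) auto
  then show ?thesis using g k by (auto simp: m_assoc[symmetric] intro: CK_on_mono)
qed

lemma skew_mult_apply:
  "k \<in> carrier G \<Longrightarrow> skew_mult G Xg ph a b k x =
     (\<Sum>g\<in>{g\<in>carrier G. a g \<noteq> (\<lambda>_. 0)}. coeff_prod g (a g) (b (inv g \<otimes> k)) x)"
  by (simp add: skew_mult_def)

lemma skew_mult_nonzeroE:
  assumes k: "k \<in> carrier G" and nz: "skew_mult G Xg ph a b k x \<noteq> 0"
  obtains g where "g \<in> carrier G" "x \<in> Xg g" "a g x \<noteq> 0" "b (inv g \<otimes> k) (ph (inv g) x) \<noteq> 0"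
proof -
  obtain g where "g \<in> carrier G" "coeff_prod g (a g) (b (inv g \<otimes> k)) x \<noteq> 0"
    using nz sum.not_neutral_contains_not_neutral unfolding skew_mult_apply[OF k] by blast
  then show ?thesis using that by (auto simp: coeff_prod_apply split: if_splits)
qed

lemma skew_mult_skew_monom:
  fixes a b :: "'x \<Rightarrow> 'k::field"
  assumes g: "g \<in> carrier G" and h: "h \<in> carrier G"
  shows "skew_mult G Xg ph (skew_monom g a) (skew_monom h b) = skew_monom (g \<otimes> h) (coeff_prod g a b)"
proof (intro ext)
  fix k x
  show "skew_mult G Xg ph (skew_monom g a) (skew_monom h b) k x = skew_monom (g \<otimes> h) (coeff_prod g a b) k x"
  proof (cases "k \<in> carrier G")
    case False
    then show ?thesis using g h by (auto simp: skew_mult_def skew_monom_def)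
  next
    case k: True
    have supp: "{g'\<in>carrier G. skew_monom g a g' \<noteq> (\<lambda>_. 0)} = (if a = (\<lambda>_. 0) then {} else {g})"
      using g by (auto simp: skew_monom_def)
    have "inv g \<otimes> k = h \<longleftrightarrow> k = g \<otimes> h" using inv_solve_left'[OF h g k] by blast
    moreover have "inv g \<otimes> (g \<otimes> h) = h" using g h by (simp add: m_assoc[symmetric])
    ultimately show ?thesis
      unfolding skew_mult_apply[OF k] supp using g by (simp add: skew_monom_def coeff_prod_apply act_fun_def)
  qed
qed

lemma skew_mult_skew_monom_one:
  "h \<in> carrier G \<Longrightarrow> skew_mult G Xg ph (skew_monom \<one> a) (skew_monom h b) = skew_monom h (\<lambda>x. a x * b x)"
  by (simp add: skew_mult_skew_monom act_fun_one)

lemma skew_ring_zero: "skew_zero \<in> skew_ring G Xg"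
  by (simp add: skew_ring_def skew_zero_def CK_on_zero)

lemma skew_ring_add:
  assumes a: "a \<in> skew_ring G Xg" and b: "b \<in> skew_ring G Xg"
  shows "skew_add a b \<in> skew_ring G Xg"
proof -
  have "{g. skew_add a b g \<noteq> (\<lambda>_. 0)} \<subseteq> {g. a g \<noteq> (\<lambda>_. 0)} \<union> {g. b g \<noteq> (\<lambda>_. 0)}"
    by (auto simp: skew_add_def)
  then show ?thesis
    using a b finite_subset by (auto simp: skew_ring_def skew_add_def CK_on_add)
qed

lemma skew_ring_neg: "a \<in> skew_ring G Xg \<Longrightarrow> skew_neg a \<in> skew_ring G Xg"
  by (auto simp: skew_ring_def skew_neg_def CK_on_uminus fun_eq_iff)

lemma skew_ring_mult:
  assumes a: "a \<in> skew_ring G Xg" and b: "b \<in> skew_ring G Xg"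
  shows "skew_mult G Xg ph a b \<in> skew_ring G Xg"
proof -
  have coeff: "skew_mult G Xg ph a b k \<in> CK_on (Xg k)" if k: "k \<in> carrier G" for k
    unfolding skew_mult_apply[OF k, abs_def]
    using k a b by (intro CK_on_sum coeff_prod_CK_on) (auto simp: skew_ring_coeff)
  have "{k. skew_mult G Xg ph a b k \<noteq> (\<lambda>_. 0)} \<subseteq>
      (\<lambda>(g, h). g \<otimes> h) ` ({g. a g \<noteq> (\<lambda>_. 0)} \<times> {h. b h \<noteq> (\<lambda>_. 0)})"
  proof
    fix k assume "k \<in> {k. skew_mult G Xg ph a b k \<noteq> (\<lambda>_. 0)}"
    then obtain x where nz: "skew_mult G Xg ph a b k x \<noteq> 0" by (auto simp: fun_eq_iff)
    then have k: "k \<in> carrier G" by (auto simp: skew_mult_def split: if_splits)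
    obtain g where g: "g \<in> carrier G" "a g x \<noteq> 0" "b (inv g \<otimes> k) (ph (inv g) x) \<noteq> 0"
      using skew_mult_nonzeroE[OF k nz] by metis
    moreover have "k = g \<otimes> (inv g \<otimes> k)" using g k by (simp add: m_assoc[symmetric])
    ultimately show "k \<in> (\<lambda>(g, h). g \<otimes> h) ` ({g. a g \<noteq> (\<lambda>_. 0)} \<times> {h. b h \<noteq> (\<lambda>_. 0)})"
      by (intro image_eqI[of _ _ "(g, inv g \<otimes> k)"]) auto
  qed
  moreover have "finite ({g. a g \<noteq> (\<lambda>_. 0)} \<times> {h. b h \<noteq> (\<lambda>_. 0)})"
    using a b by (simp add: skew_ring_def)
  ultimately have "finite {k. skew_mult G Xg ph a b k \<noteq> (\<lambda>_. 0)}"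
    by (meson finite_imageI finite_subset)
  then show ?thesis using coeff by (simp add: skew_ring_def skew_mult_def)
qed

definition invariant :: "'x set \<Rightarrow> bool" where
  "invariant V \<longleftrightarrow> (\<forall>g\<in>carrier G. ph (inv g) ` (Xg g \<inter> V) \<subseteq> Xg (inv g) \<inter> V)"

lemma invariantD:
  assumes V: "invariant V" and g: "g \<in> carrier G" and x: "x \<in> Xg g" and "ph (inv g) x \<in> V"
  shows "x \<in> V"
proof -
  have "ph g (ph (inv g) x) \<in> V"
    using V g ph_inv_mem[OF g x] \<open>ph (inv g) x \<in> V\<close> unfolding invariant_def
    by (metis IntI image_subset_iff inv_closed inv_inv le_infE)
  then show ?thesis using ph_ph_inv[OF g x] by simp
qed

lemma skew_restr_add:
  assumes a: "a \<in> skew_restr G Xg V" and b: "b \<in> skew_restr G Xg V"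
  shows "skew_add a b \<in> skew_restr G Xg V"
  unfolding skew_restr_iff
proof (intro conjI ballI allI impI)
  show "skew_add a b \<in> skew_ring G Xg"
    using skew_ring_add[OF skew_restr_ring[OF a] skew_restr_ring[OF b]] .
  fix g x assume g: "g \<in> carrier G" and "skew_add a b g x \<noteq> 0"
  then have "a g x \<noteq> 0 \<or> b g x \<noteq> 0" by (auto simp: skew_add_def)
  then show "x \<in> V" using skew_restr_nonzero_mem[OF a g] skew_restr_nonzero_mem[OF b g] by blast
qed

lemma skew_restr_neg:
  assumes a: "a \<in> skew_restr G Xg V"
  shows "skew_neg a \<in> skew_restr G Xg V"
  unfolding skew_restr_iff
proof (intro conjI ballI allI impI)
  show "skew_neg a \<in> skew_ring G Xg" using skew_ring_neg[OF skew_restr_ring[OF a]] .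
  fix g x assume "g \<in> carrier G" "skew_neg a g x \<noteq> 0"
  then show "x \<in> V" using skew_restr_nonzero_mem[OF a] by (simp add: skew_neg_def)
qed

lemma skew_restr_mult_right:
  assumes a: "a \<in> skew_restr G Xg V" and r: "r \<in> skew_ring G Xg"
  shows "skew_mult G Xg ph a r \<in> skew_restr G Xg V"
proof -
  have "x \<in> V" if "k \<in> carrier G" "skew_mult G Xg ph a r k x \<noteq> 0" for k x
    using skew_mult_nonzeroE[OF that] skew_restr_nonzero_mem[OF a] by metis
  then show ?thesis using a skew_ring_mult[OF _ r] by (simp add: skew_restr_iff)
qed

lemma skew_restr_mult_left:
  assumes V: "invariant V" and a: "a \<in> skew_restr G Xg V" and r: "r \<in> skew_ring G Xg"
  shows "skew_mult G Xg ph r a \<in> skew_restr G Xg V"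
proof -
  have "x \<in> V" if k: "k \<in> carrier G" and nz: "skew_mult G Xg ph r a k x \<noteq> 0" for k x
  proof -
    obtain g where g: "g \<in> carrier G" "x \<in> Xg g" "a (inv g \<otimes> k) (ph (inv g) x) \<noteq> 0"
      using skew_mult_nonzeroE[OF k nz] by metis
    have "ph (inv g) x \<in> V" using skew_restr_nonzero_mem[OF a _ g(3)] g(1) k by simp
    then show ?thesis using invariantD[OF V g(1,2)] by blast
  qed
  then show ?thesis using a skew_ring_mult[OF r] by (simp add: skew_restr_iff)
qed

lemma skew_ideal_skew_restr:
  assumes "invariant V"
  shows "skew_ideal G Xg ph (skew_restr G Xg V)"
proof -
  have "skew_restr G Xg V \<subseteq> skew_ring G Xg" using skew_restr_ring by blast
  moreover have "skew_zero \<in> skew_restr G Xg V"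
    using skew_ring_zero by (simp add: skew_restr_iff skew_zero_def)
  ultimately show ?thesis unfolding skew_ideal_def
    by (intro conjI ballI skew_restr_add skew_restr_neg skew_restr_mult_right
        skew_restr_mult_left[OF assms])
qed

end

locale ample_group_partial_action = group_partial_action G Xg ph
  for G :: "('g, 'm) monoid_scheme" (structure) and Xg :: "'g \<Rightarrow> 'x::t2_space set" and ph +
  assumes compact_open_base:
    "\<And>(W :: 'x set) x. open W \<Longrightarrow> x \<in> W \<Longrightarrow> \<exists>U. open U \<and> compact U \<and> x \<in> U \<and> U \<subseteq> W"
begin

lemma CK_on_bump:
  assumes "open W" "x \<in> W"
  obtains c :: "'x \<Rightarrow> 'k::field" where "c \<in> CK_on W" "c x = 1"
proof -
  obtain U where "open U" "compact U" "x \<in> U" "U \<subseteq> W" using compact_open_base[OF assms] by blast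
  then show ?thesis by (intro that[OF CK_on_indicator[of U W]]) simp_all
qed

end

section \<open>The invariant open set V_I\<close>

context group_partial_action
begin

context
  fixes I :: "('g \<Rightarrow> 'x \<Rightarrow> 'k::field) set"
  assumes ideal: "skew_ideal G Xg ph I"
begin

lemma CK_ideal_diagonal: "CK_ideal {f. skew_monom \<one> f \<in> I}"
proof -
  have sub: "{f. skew_monom \<one> f \<in> I} \<subseteq> CK"
  proof
    fix f assume "f \<in> {f. skew_monom \<one> f \<in> I}"
    then have "skew_monom \<one> f \<in> skew_ring G Xg" using skew_idealD(1)[OF ideal] by blast
    from skew_ring_coeff[OF this one_closed] show "f \<in> CK"
      by (simp add: skew_monom_def Xg_one CK_on_UNIV)
  qed
  have zero: "skew_monom \<one> (\<lambda>_. 0) \<in> I"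
    using skew_idealD(2)[OF ideal] by (simp add: skew_monom_zero)
  have add: "skew_monom \<one> (\<lambda>x. f x + g x) \<in> I" if "skew_monom \<one> f \<in> I" "skew_monom \<one> g \<in> I" for f g
    using skew_idealD(3)[OF ideal that] by (simp add: skew_add_skew_monom)
  have mult: "skew_monom \<one> (\<lambda>x. q x * f x) \<in> I" if "skew_monom \<one> f \<in> I" "q \<in> CK" for f q
  proof -
    have "skew_monom \<one> q \<in> skew_ring G Xg"
      using that(2) by (intro skew_monom_in_skew_ring) (simp_all add: Xg_one CK_on_UNIV)
    from skew_idealD(4)[OF ideal that(1) this] show ?thesis by (simp add: skew_mult_skew_monom_one)
  qed
  show ?thesis
    unfolding CK_ideal_def by (intro conjI ballI sub) (simp_all add: zero add mult)
qed

lemma V_of_eq: "V_of G I = (\<Union>f\<in>{f. skew_monom \<one> f \<in> I}. {x. f x \<noteq> 0})"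
proof -
  have "V_of G I = \<Union>(supp ` {f. skew_monom \<one> f \<in> I})"
    by (simp add: V_of_eq_skew_monom setcompr_eq_image)
  also have "supp ` {f. skew_monom \<one> f \<in> I} = (\<lambda>f. {x. f x \<noteq> 0}) ` {f. skew_monom \<one> f \<in> I}"
  proof (rule image_cong[OF refl])
    fix f assume "f \<in> {f. skew_monom \<one> f \<in> I}"
    then have "closed {x. f x \<noteq> 0}" using CK_idealD(1)[OF CK_ideal_diagonal] closed_nonzero_CK by blast
    then show "supp f = {x. f x \<noteq> 0}" by (simp add: supp_def closure_closed)
  qed
  finally show ?thesis .
qed

lemma mem_V_of_iff: "x \<in> V_of G I \<longleftrightarrow> (\<exists>f. skew_monom \<one> f \<in> I \<and> f x \<noteq> 0)"
  unfolding V_of_eq by blast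

lemma skew_restr_V_of_subset: "skew_restr G Xg (V_of G I) \<subseteq> I"
proof
  fix a :: "'g \<Rightarrow> 'x \<Rightarrow> 'k" assume a: "a \<in> skew_restr G Xg (V_of G I)"
  then have ar: "a \<in> skew_ring G Xg" by (rule skew_restr_ring)
  have "homog a g \<in> I" if "a g \<noteq> (\<lambda>_. 0)" for g
  proof -
    have g: "g \<in> carrier G" using skew_ring_outside_carrier[OF ar] that by blast
    have ag: "a g \<in> CK_on (Xg g)" using skew_ring_coeff[OF ar g] .
    have "{x. a g x \<noteq> 0} \<subseteq> (\<Union>f\<in>{f. skew_monom \<one> f \<in> I}. {x. f x \<noteq> 0})"
      using skew_restr_nonzero_mem[OF a g] unfolding V_of_eq by blast
    then obtain u where u: "u \<in> {f. skew_monom \<one> f \<in> I}" "\<forall>x\<in>{x. a g x \<noteq> 0}. u x = 1"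
      by (rule CK_ideal_unit_on_compact[OF CK_ideal_diagonal compact_nonzero_CK[OF CK_on_CK[OF ag]]])
    have "skew_mult G Xg ph (skew_monom \<one> u) (skew_monom g (a g)) \<in> I"
    proof (rule skew_idealD(5)[OF ideal])
      show "skew_monom \<one> u \<in> I" using u(1) by simp
      show "skew_monom g (a g) \<in> skew_ring G Xg" using g ag by (rule skew_monom_in_skew_ring)
    qed
    moreover have "(\<lambda>x. u x * a g x) = a g"
    proof
      fix x show "u x * a g x = a g x" using u(2) by (cases "a g x = 0") auto
    qed
    ultimately show ?thesis by (simp add: skew_mult_skew_monom_one[OF g] homog_eq_skew_monom)
  qed
  moreover have "finite {g. a g \<noteq> (\<lambda>_. 0)}" using ar by (simp add: skew_ring_def)
  ultimately show "a \<in> I" using mem_if_homog_mem[OF skew_idealD(2,3)[OF ideal]] by blast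
qed

end

end

context ample_group_partial_action
begin

context
  fixes I :: "('g \<Rightarrow> 'x \<Rightarrow> 'k::field) set"
  assumes ideal: "skew_ideal G Xg ph I"
begin

lemma V_of_if_skew_monom_mem:
  assumes f: "skew_monom g f \<in> I" and g: "g \<in> carrier G" and x: "f x \<noteq> 0"
  shows "x \<in> V_of G I"
proof -
  have "skew_monom g f \<in> skew_ring G Xg" using f skew_idealD(1)[OF ideal] by blast
  from skew_ring_coeff[OF this g] have "f \<in> CK_on (Xg g)" by (simp add: skew_monom_def)
  then have xg: "x \<in> Xg g" using x by (auto simp: CK_on_def)
  obtain c :: "'x \<Rightarrow> 'k" where c: "c \<in> CK_on (Xg (inv g))" "c (ph (inv g) x) = 1"
    using CK_on_bump[OF open_Xg ph_inv_mem[OF g xg]] g by blast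
  have "skew_monom (inv g) c \<in> skew_ring G Xg" using g c(1) by (intro skew_monom_in_skew_ring) simp_all
  from skew_idealD(5)[OF ideal f this]
  have "skew_monom \<one> (coeff_prod g f c) \<in> I" using g by (simp add: skew_mult_skew_monom)
  moreover have "coeff_prod g f c x \<noteq> 0" using g xg x c(2) by (simp add: coeff_prod_apply)
  ultimately show ?thesis using mem_V_of_iff[OF ideal] by blast
qed

lemma invariant_V_of: "invariant (V_of G I)"
  unfolding invariant_def
proof (intro ballI image_subsetI IntI)
  fix g x assume g: "g \<in> carrier G" and x: "x \<in> Xg g \<inter> V_of G I"
  let ?z = "ph (inv g) x"
  show z: "?z \<in> Xg (inv g)" using ph_inv_mem g x by blast
  obtain f where f: "skew_monom \<one> f \<in> I" "f x \<noteq> 0" using x mem_V_of_iff[OF ideal] by blast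
  obtain b :: "'x \<Rightarrow> 'k" where b: "b \<in> CK_on (Xg (inv g))" "b ?z = 1"
    using CK_on_bump[OF open_Xg z] g by blast
  have "skew_monom (inv g) b \<in> skew_ring G Xg" using g b(1) by (intro skew_monom_in_skew_ring) simp_all
  from skew_idealD(4)[OF ideal f(1) this]
  have "skew_monom (inv g) (coeff_prod (inv g) b f) \<in> I" using g by (simp add: skew_mult_skew_monom)
  moreover have "coeff_prod (inv g) b f ?z = f x"
    using coeff_prod_apply[of "inv g" b f ?z] g x z b(2) by (simp add: ph_ph_inv)
  ultimately show "?z \<in> V_of G I" using V_of_if_skew_monom_mem g f(2) by simp
qed

lemma graded_subset_skew_restr_V_of:
  assumes graded: "graded G J" and JI: "J \<subseteq> I"
  shows "J \<subseteq> skew_restr G Xg (V_of G I)"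
proof
  fix a assume a: "a \<in> J"
  have "x \<in> V_of G I" if g: "g \<in> carrier G" and x: "a g x \<noteq> 0" for g x
  proof -
    have "homog a g \<in> I" using graded a g JI unfolding graded_def by blast
    then show ?thesis using V_of_if_skew_monom_mem[of g "a g" x] g x by (simp add: homog_eq_skew_monom)
  qed
  moreover have "a \<in> skew_ring G Xg" using a JI skew_idealD(1)[OF ideal] by blast
  ultimately show "a \<in> skew_restr G Xg (V_of G I)" by (simp add: skew_restr_iff)
qed

end

end

theorem mainTheorem9:
  fixes G :: "('g, 'm) monoid_scheme"
    and Xg :: "'g \<Rightarrow> 'x::t2_space set"
    and ph :: "'g \<Rightarrow> 'x \<Rightarrow> 'x"
    and I :: "('g \<Rightarrow> 'x \<Rightarrow> 'k::field) set"
  assumes "locally_compact_space (euclidean :: 'x topology)"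
    and "totally_disconnected_space (euclidean :: 'x topology)"
    and "group G"
    and "partial_action G Xg ph"
    and "skew_ideal G Xg ph I"
  shows "skew_restr G Xg (V_of G I) \<subseteq> I
    \<and> skew_ideal G Xg ph (skew_restr G Xg (V_of G I))
    \<and> graded G (skew_restr G Xg (V_of G I))
    \<and> (\<forall>J. skew_ideal G Xg ph J \<and> graded G J \<and> J \<subseteq> I \<longrightarrow> J \<subseteq> skew_restr G Xg (V_of G I))"
proof -
  interpret ample_group_partial_action G Xg ph
    using assms compact_open_base_if_totally_disconnected[OF assms(1,2)]
    by (intro ample_group_partial_action.intro group_partial_action.intro
        ample_group_partial_action_axioms.intro group_partial_action_axioms.intro)
  show ?thesis
    using skew_restr_V_of_subset[OF assms(5)] skew_ideal_skew_restr[OF invariant_V_of[OF assms(5)]]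
      graded_skew_restr graded_subset_skew_restr_V_of[OF assms(5)]
    by blast
qed

end
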